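(* For any finite set of distinct time-frequency points $\Sigma=\{\sigma_1,\ldots,\sigma_N\}\subset\mathbb{R}^{2d}$ there is a function $g\in L^2(\mathbb{R}^d)$ such that $\{U_{\sigma_k}g: 1\le k\le N\}$ is an orthonormal set.
   Context: For $\lambda=(t,\omega)\in\mathbb{R}^d\times\mathbb{R}^d$, $U_{(t,\omega)}f(x)=e^{i\langle\omega,x\rangle}f(x-t)$ on $L^2(\mathbb{R}^d)$. *)

theory Defs
  imports "HOL-Analysis.Analysis"
begin

definition L2 :: "(real^'d \<Rightarrow> complex) set" where
  "L2 = {f. f \<in> borel_measurable lebesgue \<and> integrable lebesgue (\<lambda>x. (cmod (f x))^2)}"

definition L2_inner :: "(real^'d \<Rightarrow> complex) \<Rightarrow> (real^'d \<Rightarrow> complex) \<Rightarrow> complex" where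
  "L2_inner f g = (LINT x|lebesgue. f x * cnj (g x))"

definition tf_shift :: "(real^'d) \<times> (real^'d) \<Rightarrow> (real^'d \<Rightarrow> complex) \<Rightarrow> real^'d \<Rightarrow> complex" where
  "tf_shift p f x = exp (\<i> * complex_of_real (snd p \<bullet> x)) * f (x - fst p)"

end

theory Submission
  imports Defs
begin

(* Take g to be the normalised indicator of a bounded open set S. Two shifts of g with
   different time components t, t' are orthogonal once t - t' is not a difference of two
   points of S; with equal time components their inner product is, up to a unimodular
   factor, the Fourier transform of the indicator of S at the frequency difference.
   Start from a ball small enough that its differences avoid all nonzero time differences,
   and kill the nonzero frequency differences w one at a time by replacing S with
   S \<union> (v + S), where v is so far away that the new differences are longer than all time
   differences, and chosen with exp (i <w, v>) = -1: the Fourier transform of the indicator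
   gets multiplied by 1 + exp (i <w, v>), which vanishes at w and preserves earlier zeros. *)

definition plane_wave :: "'a::real_inner \<Rightarrow> 'a \<Rightarrow> complex" where
  "plane_wave w x = exp (\<i> * complex_of_real (w \<bullet> x))"

lemma plane_wave_add: "plane_wave w (x + y) = plane_wave w x * plane_wave w y"
  by (simp add: plane_wave_def inner_add_right distrib_left exp_add)

lemma plane_wave_zero [simp]: "plane_wave 0 x = 1"
  by (simp add: plane_wave_def)

lemma norm_plane_wave [simp]: "norm (plane_wave w x) = 1"
  by (simp add: plane_wave_def)

lemma plane_wave_mult_cnj: "plane_wave w x * cnj (plane_wave w' x) = plane_wave (w - w') x"
  by (simp add: plane_wave_def exp_cnj inner_diff_left right_diff_distrib exp_diff exp_minus
      divide_inverse)

lemma borel_measurable_plane_wave [measurable]: "plane_wave w \<in> borel_measurable borel"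
  unfolding plane_wave_def by (intro borel_measurable_continuous_onI continuous_intros)

lemma plane_wave_eq_minus_one_far:
  fixes w :: "'a::real_inner"
  assumes "w \<noteq> 0"
  shows "\<exists>v. M < norm v \<and> plane_wave w v = -1"
proof -
  have nw: "norm w > 0" using assms by simp
  obtain m :: nat where m: "M * norm w / pi < m" using reals_Archimedean2 by blast
  define v where "v = ((2 * m + 1) * pi / (norm w)\<^sup>2) *\<^sub>R w"
  have "M < m * pi / norm w" using m nw by (simp add: field_simps)
  also have "\<dots> \<le> norm v" using nw
    by (simp add: v_def power2_eq_square divide_right_mono)
  finally have "M < norm v" .
  moreover have "plane_wave w v = -1"
  proof -
    have "w \<bullet> v = real (2 * m + 1) * pi"
      using nw by (simp add: v_def power2_norm_eq_inner)
    then have "plane_wave w v = cis (real (2 * m + 1) * pi)"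
      by (simp add: plane_wave_def cis_conv_exp)
    also have "\<dots> = -1"
      by (simp only: complex_eq_iff cos_npi sin_npi cis.sel) simp
    finally show ?thesis .
  qed
  ultimately show ?thesis by blast
qed

lemma lborel_integrable_translate:
  fixes g :: "'a::euclidean_space \<Rightarrow> 'b::{banach, second_countable_topology}"
  assumes "g \<in> borel_measurable borel"
  shows "integrable lborel (\<lambda>x. g (c + x)) \<longleftrightarrow> integrable lborel g"
  using integrable_distr_eq[of "(+) c" lborel borel g] assms by (simp add: lborel_distr_plus)

lemma lborel_integral_translate:
  fixes g :: "'a::euclidean_space \<Rightarrow> 'b::{banach, second_countable_topology}"
  assumes "g \<in> borel_measurable borel"
  shows "(LINT x|lborel. g (c + x)) = integral\<^sup>L lborel g"
  using integral_distr[of "(+) c" lborel borel g] assms by (simp add: lborel_distr_plus)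

lemma measure_lborel_open_pos:
  fixes S :: "'a::euclidean_space set"
  assumes "open S" "bounded S" "S \<noteq> {}"
  shows "0 < measure lborel S"
proof -
  obtain x r where "0 < r" "ball x r \<subseteq> S"
    using assms(1,3) openE by blast
  moreover have "S \<in> fmeasurable lborel"
    using assms(1) emeasure_bounded_finite[OF assms(2)] by (intro fmeasurableI) auto
  ultimately have "measure lborel (ball x r) \<le> measure lborel S"
    by (intro measure_mono_fmeasurable) auto
  then show ?thesis
    using content_ball_pos[OF \<open>0 < r\<close>, of x] by linarith
qed

definition fourier_indicator :: "'a::euclidean_space set \<Rightarrow> 'a \<Rightarrow> complex" where
  "fourier_indicator S w = (LINT x|lborel. indicator S x * plane_wave w x)"

lemma fourier_indicator_zero:
  assumes "S \<in> sets borel" "emeasure lborel S < \<infinity>"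
  shows "fourier_indicator S 0 = measure lborel S"
proof -
  have "(\<lambda>x. indicator S x :: complex) = (\<lambda>x. of_real (indicator S x))"
    by (auto simp: indicator_def)
  then show ?thesis
    using assms by (simp add: fourier_indicator_def)
qed

lemma integrable_indicator_plane_wave:
  fixes S :: "'a::euclidean_space set"
  assumes "S \<in> sets borel" "emeasure lborel S < \<infinity>"
  shows "integrable lborel (\<lambda>x. indicator S x * plane_wave w x)"
proof (rule Bochner_Integration.integrable_bound)
  show "integrable lborel (indicator S :: 'a \<Rightarrow> real)"
    using assms by simp
  show "AE x in lborel. norm (indicator S x * plane_wave w x) \<le> norm (indicator S x :: real)"
    by (simp add: indicator_def)
qed (use assms in measurable)

lemma
  fixes S :: "'a::euclidean_space set"
  assumes "S \<in> sets borel"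
  shows lborel_integral_indicator_shift_plane_wave:
      "(LINT x|lborel. indicator S (x - v) * plane_wave w x) = plane_wave w v * fourier_indicator S w"
    and lborel_integrable_indicator_shift_plane_wave:
      "emeasure lborel S < \<infinity> \<Longrightarrow> integrable lborel (\<lambda>x. indicator S (x - v) * plane_wave w x)"
proof -
  let ?h = "\<lambda>x. indicator S (x - v) * plane_wave w x :: complex"
  have h: "?h \<in> borel_measurable borel" using assms by measurable
  have shift: "?h (v + x) = plane_wave w v * (indicator S x * plane_wave w x)" for x
    by (simp add: plane_wave_add)
  show "integral\<^sup>L lborel ?h = plane_wave w v * fourier_indicator S w"
    using lborel_integral_translate[OF h, of v]
    by (simp only: shift fourier_indicator_def integral_mult_right_zero)
  show "integrable lborel ?h" if "emeasure lborel S < \<infinity>"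
    using lborel_integrable_translate[OF h, of v] integrable_indicator_plane_wave[OF assms that]
    by (simp only: shift integrable_mult_right_iff) simp
qed

lemma fourier_indicator_Un_translation:
  fixes S :: "'a::euclidean_space set"
  assumes "S \<in> sets borel" "emeasure lborel S < \<infinity>" "S \<inter> (+) v ` S = {}"
  shows "fourier_indicator (S \<union> (+) v ` S) w = (1 + plane_wave w v) * fourier_indicator S w"
proof -
  have "x \<in> (+) v ` S \<longleftrightarrow> x - v \<in> S" for x
    by (auto simp: image_iff) (metis add.commute diff_add_cancel)
  then have "indicator (S \<union> (+) v ` S) x = (indicator S x + indicator S (x - v) :: complex)" for x
    using assms(3) by (auto simp: indicator_def)
  then have "fourier_indicator (S \<union> (+) v ` S) w
      = (LINT x|lborel. indicator S x * plane_wave w x + indicator S (x - v) * plane_wave w x)"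
    by (simp add: fourier_indicator_def distrib_right)
  also have "\<dots> = fourier_indicator S w + (LINT x|lborel. indicator S (x - v) * plane_wave w x)"
    unfolding fourier_indicator_def using assms(1,2)
    by (intro Bochner_Integration.integral_add integrable_indicator_plane_wave
        lborel_integrable_indicator_shift_plane_wave)
  also have "\<dots> = fourier_indicator S w + plane_wave w v * fourier_indicator S w"
    using assms(1) by (simp add: lborel_integral_indicator_shift_plane_wave)
  finally show ?thesis by (simp add: distrib_right)
qed

lemma separated_Un_translation:
  fixes S :: "'a::real_normed_vector set"
  assumes "S \<subseteq> cball 0 R" "\<forall>x\<in>S. \<forall>y\<in>S. x - y \<notin> T"
    and "\<forall>D\<in>insert 0 T. 2 * R + norm D < norm v"
  shows "S \<inter> (+) v ` S = {}" and "\<forall>x\<in>S \<union> (+) v ` S. \<forall>y\<in>S \<union> (+) v ` S. x - y \<notin> T"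
proof -
  have far: "norm D < norm (v + (a - b))" if "a \<in> S" "b \<in> S" "D \<in> insert 0 T" for a b D
  proof -
    have "norm a \<le> R" "norm b \<le> R" using assms(1) that(1,2) by auto
    then have "norm (a - b) \<le> 2 * R" using norm_triangle_ineq4[of a b] by linarith
    moreover have "norm v \<le> norm (v + (a - b)) + norm (a - b)"
      using norm_triangle_sub[of v "v + (a - b)"] norm_minus_commute[of a b] by simp
    ultimately show ?thesis using assms(3) that(3) by fastforce
  qed
  show "S \<inter> (+) v ` S = {}"
  proof (rule ccontr)
    assume "S \<inter> (+) v ` S \<noteq> {}"
    then obtain a b where "a \<in> S" "b \<in> S" "a = v + b" by auto
    then show False using far[of b a 0] by simp
  qed
  show "\<forall>x\<in>S \<union> (+) v ` S. \<forall>y\<in>S \<union> (+) v ` S. x - y \<notin> T"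
  proof (intro ballI notI)
    fix x y assume x: "x \<in> S \<union> (+) v ` S" and y: "y \<in> S \<union> (+) v ` S" and xy: "x - y \<in> T"
    show False
    proof (cases "x \<in> S"; cases "y \<in> S")
      assume "x \<in> S" "y \<notin> S"
      then obtain b where b: "b \<in> S" "y = v + b" using y by auto
      then have "norm (x - y) = norm (v + (b - x))"
        using norm_minus_commute[of x y] by (simp add: algebra_simps)
      then show False using far[of b x "x - y"] xy b(1) \<open>x \<in> S\<close> by simp
    next
      assume "x \<notin> S" "y \<in> S"
      then obtain a where "a \<in> S" "x - y = v + (a - y)" using x by auto
      then show False using far[of a y "x - y"] xy \<open>y \<in> S\<close> by (simp add: add_diff_eq)
    qed (use assms(2) x y xy in auto)
  qed
qed

lemma exists_separated_superset_fourier_vanishing: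
  fixes S T :: "'a::euclidean_space set"
  assumes "open S" "bounded S" "finite T" "\<forall>x\<in>S. \<forall>y\<in>S. x - y \<notin> T" "w \<noteq> 0"
  shows "\<exists>S'. open S' \<and> bounded S' \<and> S \<subseteq> S' \<and> (\<forall>x\<in>S'. \<forall>y\<in>S'. x - y \<notin> T) \<and>
    fourier_indicator S' w = 0 \<and> (\<forall>u. fourier_indicator S u = 0 \<longrightarrow> fourier_indicator S' u = 0)"
proof -
  obtain R where R: "S \<subseteq> cball 0 R" using assms(2) by (auto simp: bounded_iff subset_eq)
  obtain v where v: "2 * R + Max (norm ` insert 0 T) < norm v" "plane_wave w v = -1"
    using plane_wave_eq_minus_one_far[OF assms(5)] by blast
  have "\<forall>D\<in>insert 0 T. 2 * R + norm D < norm v"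
  proof
    fix D assume "D \<in> insert 0 T"
    then have "norm D \<le> Max (norm ` insert 0 T)" using assms(3) by (intro Max_ge) auto
    then show "2 * R + norm D < norm v" using v(1) by linarith
  qed
  note doubling = separated_Un_translation[OF R assms(4) this]
  have fourier: "fourier_indicator (S \<union> (+) v ` S) u = (1 + plane_wave u v) * fourier_indicator S u" for u
    using borel_open[OF assms(1)] emeasure_bounded_finite[OF assms(2)] doubling(1)
    by (rule fourier_indicator_Un_translation)
  show ?thesis
  proof (intro exI conjI)
    show "open (S \<union> (+) v ` S)" using assms(1) by (intro open_Un open_translation)
    show "bounded (S \<union> (+) v ` S)" using assms(2) by (simp add: bounded_translation)
    show "fourier_indicator (S \<union> (+) v ` S) w = 0" using fourier[of w] v(2) by simp
    show "\<forall>u. fourier_indicator S u = 0 \<longrightarrow> fourier_indicator (S \<union> (+) v ` S) u = 0"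
      using fourier by simp
    show "S \<subseteq> S \<union> (+) v ` S" by (rule Un_upper1)
    show "\<forall>x\<in>S \<union> (+) v ` S. \<forall>y\<in>S \<union> (+) v ` S. x - y \<notin> T" by (fact doubling(2))
  qed
qed

lemma exists_separated_set_fourier_vanishing:
  fixes T F :: "'a::euclidean_space set"
  assumes "finite T" "0 \<notin> T" "finite F" "0 \<notin> F"
  shows "\<exists>S. open S \<and> bounded S \<and> S \<noteq> {} \<and> (\<forall>x\<in>S. \<forall>y\<in>S. x - y \<notin> T) \<and>
    (\<forall>w\<in>F. fourier_indicator S w = 0)"
  using assms(3,4)
proof (induction F)
  case empty
  obtain \<delta> where "\<delta> > 0" and \<delta>: "\<forall>D\<in>T. D \<noteq> 0 \<longrightarrow> \<delta> \<le> dist 0 D"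
    using finite_set_avoid[OF assms(1)] by blast
  have "x - y \<notin> T" if "x \<in> ball 0 (\<delta> / 2)" "y \<in> ball 0 (\<delta> / 2)" for x y
  proof
    assume "x - y \<in> T"
    then have "\<delta> \<le> norm (x - y)" using \<delta> assms(2) by (metis dist_0_norm)
    moreover have "norm x < \<delta> / 2" "norm y < \<delta> / 2" using that by simp_all
    then have "norm (x - y) < \<delta>" using norm_triangle_ineq4[of x y] by linarith
    ultimately show False by simp
  qed
  moreover have "ball 0 (\<delta> / 2) \<noteq> {}" using \<open>\<delta> > 0\<close> by simp
  ultimately show ?case by (intro exI[of _ "ball 0 (\<delta> / 2)"]) simp
next
  case (insert w F)
  then obtain S where S: "open S" "bounded S" "S \<noteq> {}" "\<forall>x\<in>S. \<forall>y\<in>S. x - y \<notin> T"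
      "\<forall>w\<in>F. fourier_indicator S w = 0"
    by auto
  have "w \<noteq> 0" using insert.prems by auto
  obtain S' where "open S'" "bounded S'" "S \<subseteq> S'" "\<forall>x\<in>S'. \<forall>y\<in>S'. x - y \<notin> T"
      "fourier_indicator S' w = 0" "\<forall>u. fourier_indicator S u = 0 \<longrightarrow> fourier_indicator S' u = 0"
    using exists_separated_superset_fourier_vanishing[OF S(1,2) assms(1) S(4) \<open>w \<noteq> 0\<close>] by blast
  then show ?case using S(3,5) by (intro exI[of _ S']) auto
qed

lemma tf_shift_mult_cnj:
  "tf_shift (t, w) f x * cnj (tf_shift (t', w') g x) = plane_wave (w - w') x * (f (x - t) * cnj (g (x - t')))"
  by (simp add: tf_shift_def plane_wave_mult_cnj[symmetric]) (simp add: plane_wave_def)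

lemma tf_shift_scale: "tf_shift \<sigma> (\<lambda>x. c * f x) = (\<lambda>x. c * tf_shift \<sigma> f x)"
  by (simp add: tf_shift_def fun_eq_iff mult.left_commute)

lemma L2_inner_scale: "L2_inner (\<lambda>x. a * f x) (\<lambda>x. b * g x) = a * cnj b * L2_inner f g"
  by (simp add: L2_inner_def mult_ac integral_mult_right_zero flip: integral_mult_right_zero)

lemma L2_inner_tf_shift_indicator:
  fixes S :: "(real^'d) set"
  assumes "S \<in> sets borel" "emeasure lborel S < \<infinity>"
    and "t \<noteq> t' \<Longrightarrow> \<forall>x\<in>S. \<forall>y\<in>S. x - y \<noteq> t - t'"
    and "w \<noteq> w' \<Longrightarrow> fourier_indicator S (w - w') = 0"
  shows "L2_inner (tf_shift (t, w) (indicator S)) (tf_shift (t', w') (indicator S))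
    = (if (t, w) = (t', w') then measure lborel S else 0)"
proof (cases "t = t'")
  case True
  note [measurable] = assms(1)
  have indicator_cnj: "indicator S y * cnj (indicator S y) = (indicator S y :: complex)" for y
    by (simp add: indicator_def)
  have "L2_inner (tf_shift (t, w) (indicator S)) (tf_shift (t', w') (indicator S))
      = (LINT x|lebesgue. indicator S (x - t) * plane_wave (w - w') x)"
    unfolding L2_inner_def tf_shift_mult_cnj True indicator_cnj by (simp add: mult.commute)
  also have "\<dots> = (LINT x|lborel. indicator S (x - t) * plane_wave (w - w') x)"
    by (intro integral_completion) measurable
  also have "\<dots> = plane_wave (w - w') t * fourier_indicator S (w - w')"
    using assms(1) by (rule lborel_integral_indicator_shift_plane_wave)
  finally show ?thesis
    using True assms(1,2,4) by (cases "w = w'") (simp_all add: fourier_indicator_zero)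
next
  case False
  have no_overlap: "indicator S (x - t) * cnj (indicator S (x - t')) = (0 :: complex)" for x
    using assms(3)[OF False, rule_format, of "x - t'" "x - t"] by (auto simp: indicator_def)
  then show ?thesis
    unfolding L2_inner_def tf_shift_mult_cnj no_overlap using False by simp
qed

definition normalized_indicator :: "'a::euclidean_space set \<Rightarrow> 'a \<Rightarrow> complex" where
  "normalized_indicator S x = complex_of_real (1 / sqrt (measure lborel S)) * indicator S x"

lemma normalized_indicator_in_L2:
  fixes S :: "(real^'d) set"
  assumes "S \<in> sets borel" "emeasure lborel S < \<infinity>"
  shows "normalized_indicator S \<in> L2"
proof -
  note [measurable] = assms(1)
  define c where "c = complex_of_real (1 / sqrt (measure lborel S))"
  have "normalized_indicator S \<in> borel_measurable lebesgue"
    unfolding normalized_indicator_def[abs_def] by (intro measurable_completion) measurable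
  moreover have "(\<lambda>x. (cmod (normalized_indicator S x))\<^sup>2) = (\<lambda>x. (cmod c)\<^sup>2 * indicator S x)"
    by (auto simp: normalized_indicator_def c_def indicator_def fun_eq_iff norm_mult)
  moreover have "integrable lebesgue (\<lambda>x. (cmod c)\<^sup>2 * indicator S x :: real)"
    using assms by (intro integrable_mult_right integrable_completion) auto
  ultimately show ?thesis by (simp add: L2_def)
qed

lemma L2_inner_tf_shift_normalized_indicator:
  fixes S :: "(real^'d) set"
  assumes "S \<in> sets borel" "emeasure lborel S < \<infinity>" "0 < measure lborel S"
    and "t \<noteq> t' \<Longrightarrow> \<forall>x\<in>S. \<forall>y\<in>S. x - y \<noteq> t - t'"
    and "w \<noteq> w' \<Longrightarrow> fourier_indicator S (w - w') = 0"
  shows "L2_inner (tf_shift (t, w) (normalized_indicator S)) (tf_shift (t', w') (normalized_indicator S))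
    = (if (t, w) = (t', w') then 1 else 0)"
proof -
  define c where "c = complex_of_real (1 / sqrt (measure lborel S))"
  have c: "c * cnj c * measure lborel S = 1"
  proof -
    have "1 / sqrt (measure lborel S) * (1 / sqrt (measure lborel S)) * measure lborel S = 1"
      using assms(3) by simp
    then show ?thesis
      unfolding c_def complex_cnj_complex_of_real of_real_mult[symmetric] by simp
  qed
  have "normalized_indicator S = (\<lambda>x. c * indicator S x)"
    by (simp add: normalized_indicator_def[abs_def] c_def)
  then have "L2_inner (tf_shift (t, w) (normalized_indicator S)) (tf_shift (t', w') (normalized_indicator S))
      = c * cnj c * L2_inner (tf_shift (t, w) (indicator S)) (tf_shift (t', w') (indicator S))"
    by (simp add: tf_shift_scale L2_inner_scale)
  then show ?thesis
    using c by (simp add: L2_inner_tf_shift_indicator[OF assms(1,2,4,5)])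
qed

theorem lemma2:
  fixes \<Sigma> :: "((real^'d) \<times> (real^'d)) set"
  assumes "finite \<Sigma>"
  shows "\<exists>g \<in> (L2 :: (real^'d \<Rightarrow> complex) set).
           \<forall>\<sigma>\<in>\<Sigma>. \<forall>\<tau>\<in>\<Sigma>. L2_inner (tf_shift \<sigma> g) (tf_shift \<tau> g) = (if \<sigma> = \<tau> then 1 else 0)"
proof -
  define T where "T = (\<lambda>(\<sigma>, \<tau>). fst \<sigma> - fst \<tau>) ` (\<Sigma> \<times> \<Sigma>) - {0}"
  define F where "F = (\<lambda>(\<sigma>, \<tau>). snd \<sigma> - snd \<tau>) ` (\<Sigma> \<times> \<Sigma>) - {0}"
  obtain S :: "(real^'d) set" where S: "open S" "bounded S" "S \<noteq> {}"
      "\<forall>x\<in>S. \<forall>y\<in>S. x - y \<notin> T" "\<forall>w\<in>F. fourier_indicator S w = 0"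
    using exists_separated_set_fourier_vanishing[of T F] assms by (auto simp: T_def F_def)
  have S_fin: "S \<in> sets borel" "emeasure lborel S < \<infinity>"
    using S(1) emeasure_bounded_finite[OF S(2)] by auto
  show ?thesis
  proof (intro bexI ballI)
    show "normalized_indicator S \<in> L2" by (rule normalized_indicator_in_L2[OF S_fin])
    fix \<sigma> \<tau> assume "\<sigma> \<in> \<Sigma>" "\<tau> \<in> \<Sigma>"
    moreover obtain t w t' w' where \<sigma>\<tau>: "\<sigma> = (t, w)" "\<tau> = (t', w')" by fastforce
    ultimately have "t \<noteq> t' \<Longrightarrow> t - t' \<in> T" "w \<noteq> w' \<Longrightarrow> w - w' \<in> F"
      unfolding T_def F_def by force+
    then show "L2_inner (tf_shift \<sigma> (normalized_indicator S)) (tf_shift \<tau> (normalized_indicator S))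
        = (if \<sigma> = \<tau> then 1 else 0)"
      unfolding \<sigma>\<tau> using measure_lborel_open_pos[OF S(1-3)]
      by (intro L2_inner_tf_shift_normalized_indicator S_fin) (use S(4,5) in metis)+
  qed
qed

end
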